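(* Let $(\mathcal A,(p_n)_{n\in\mathbb N})$ and $(\mathcal B,(q_m)_{m\in\mathbb N})$ be Fréchet algebras and let $\varphi:\mathcal A\to\mathcal B$ be a continuous homomorphism with dense range. Let $I$ be a closed ideal of $\mathcal A$ and $J$ a closed ideal of $\mathcal B$ such that $\varphi(I)\subseteq J$. If $\mathcal A$ has a locally bounded approximate diagonal modulo $I$, then $\mathcal B$ has a locally bounded approximate diagonal modulo $J$.
   Context: A Fréchet algebra $(\mathcal A,(p_n))$ is a complete Hausdorff topological algebra whose topology is given by an increasing sequence $p_1\le p_2\le\cdots$ of submultiplicative seminorms. For a closed ideal $I$ of $\mathcal A$, $\mathcal A/I$ is a Fréchet algebra with seminorms $\hat p_n(a+I)=\inf\{p_n(a+b):b\in I\}$; write $\tilde a=a+I$. Let $\frac{\mathcal A}{I}\widehat\otimes\frac{\mathcal A}{I}$ be the completed projective tensor product, with seminorms $\hat r_n(M)=\inf\{\sum_i \hat p_n(x_i)\hat p_n(y_i): M=\sum_i x_i\otimes y_i\}$. It is an $\mathcal A$-bimodule via $a\cdot((b+I)\otimes(c+I))=(ab+I)\otimes(c+I)$ and $((b+I)\otimes(c+I))\cdot a=(b+I)\otimes(ca+I)$; $\mathcal A$ acts on $\mathcal A/I$ by $a\cdot(b+I)=ab+I$. The diagonal map $\pi_{\mathcal A/I}:\frac{\mathcal A}{I}\widehat\otimes\frac{\mathcal A}{I}\to\frac{\mathcal A}{I}$ is the continuous linear map with $(b+I)\otimes(c+I)\mapsto bc+I$. $\mathcal A$ has a locally bounded approximate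 diagonal modulo $I$ if there exist positive reals $C_n$ ($n\in\mathbb N$) such that for every finite set $F\subseteq\mathcal A\setminus I$, every $n\in\mathbb N$ and every $\varepsilon>0$ there is $M\in\frac{\mathcal A}{I}\widehat\otimes\frac{\mathcal A}{I}$ with $\hat r_n(M)\le C_n$, $\hat r_n(a\cdot M-M\cdot a)<\varepsilon$ for all $a\in F$, and $\hat p_n(a\cdot\pi_{\mathcal A/I}(M)-\tilde a)<\varepsilon$ for all $a\in\mathcal A$. The analogous notions are used for $\mathcal B$, $J$ and the seminorms $q_m$. *)

theory Defs
  imports Main "HOL.Real_Vector_Spaces"
begin

text \<open>A Frechet algebra is modelled as a (not necessarily unital) real algebra (the whole type
  is the algebra) together with a sequence of seminorms p n.\<close>

definition seminorm :: "('a::real_vector \<Rightarrow> real) \<Rightarrow> bool" where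
  "seminorm s \<longleftrightarrow> (\<forall>x y. s (x + y) \<le> s x + s y) \<and> (\<forall>r x. s (r *\<^sub>R x) = \<bar>r\<bar> * s x)"

definition sn_cauchy :: "(nat \<Rightarrow> 'a::real_vector \<Rightarrow> real) \<Rightarrow> (nat \<Rightarrow> 'a) \<Rightarrow> bool" where
  "sn_cauchy p X \<longleftrightarrow> (\<forall>n \<epsilon>. \<epsilon> > 0 \<longrightarrow> (\<exists>K. \<forall>j\<ge>K. \<forall>k\<ge>K. p n (X j - X k) < \<epsilon>))"

definition sn_converges :: "(nat \<Rightarrow> 'a::real_vector \<Rightarrow> real) \<Rightarrow> (nat \<Rightarrow> 'a) \<Rightarrow> 'a \<Rightarrow> bool" where
  "sn_converges p X x \<longleftrightarrow> (\<forall>n \<epsilon>. \<epsilon> > 0 \<longrightarrow> (\<exists>K. \<forall>k\<ge>K. p n (X k - x) < \<epsilon>))"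

definition frechet_algebra :: "(nat \<Rightarrow> 'a::real_algebra \<Rightarrow> real) \<Rightarrow> bool" where
  "frechet_algebra p \<longleftrightarrow>
     (\<forall>n. seminorm (p n)) \<and>
     (\<forall>n x y. p n (x * y) \<le> p n x * p n y) \<and>
     (\<forall>n x. p n x \<le> p (Suc n) x) \<and>
     (\<forall>x. (\<forall>n. p n x = 0) \<longrightarrow> x = 0) \<and>
     (\<forall>X. sn_cauchy p X \<longrightarrow> (\<exists>x. sn_converges p X x))"

definition sn_open :: "(nat \<Rightarrow> 'a::real_vector \<Rightarrow> real) \<Rightarrow> 'a set \<Rightarrow> bool" where
  "sn_open p U \<longleftrightarrow> (\<forall>x\<in>U. \<exists>n \<epsilon>. \<epsilon> > 0 \<and> {y. p n (y - x) < \<epsilon>} \<subseteq> U)"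

definition sn_continuous ::
  "(nat \<Rightarrow> 'a::real_vector \<Rightarrow> real) \<Rightarrow> (nat \<Rightarrow> 'b::real_vector \<Rightarrow> real) \<Rightarrow> ('a \<Rightarrow> 'b) \<Rightarrow> bool" where
  "sn_continuous p q f \<longleftrightarrow> (\<forall>U. sn_open q U \<longrightarrow> sn_open p (f -` U))"

definition sn_dense :: "(nat \<Rightarrow> 'a::real_vector \<Rightarrow> real) \<Rightarrow> 'a set \<Rightarrow> bool" where
  "sn_dense p S \<longleftrightarrow> (\<forall>U. sn_open p U \<and> U \<noteq> {} \<longrightarrow> U \<inter> S \<noteq> {})"

definition alg_hom :: "('a::real_algebra \<Rightarrow> 'b::real_algebra) \<Rightarrow> bool" where
  "alg_hom f \<longleftrightarrow> (\<forall>x y. f (x + y) = f x + f y) \<and> (\<forall>r x. f (r *\<^sub>R x) = r *\<^sub>R f x)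
     \<and> (\<forall>x y. f (x * y) = f x * f y)"

definition two_sided_ideal :: "'a::real_algebra set \<Rightarrow> bool" where
  "two_sided_ideal I \<longleftrightarrow> 0 \<in> I \<and> (\<forall>x\<in>I. \<forall>y\<in>I. x + y \<in> I) \<and> (\<forall>r. \<forall>x\<in>I. r *\<^sub>R x \<in> I)
     \<and> (\<forall>a. \<forall>x\<in>I. a * x \<in> I \<and> x * a \<in> I)"

definition closed_ideal :: "(nat \<Rightarrow> 'a::real_algebra \<Rightarrow> real) \<Rightarrow> 'a set \<Rightarrow> bool" where
  "closed_ideal p I \<longleftrightarrow> two_sided_ideal I \<and> sn_open p (- I)"

text \<open>Quotient seminorm on A/I, evaluated at a representative: \<open>qsn p I n x = p\<^sup>^_n(x + I)\<close>.\<close>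
definition qsn :: "(nat \<Rightarrow> 'a::real_algebra \<Rightarrow> real) \<Rightarrow> 'a set \<Rightarrow> nat \<Rightarrow> 'a \<Rightarrow> real" where
  "qsn p I n x = Inf {p n (x + b) | b. b \<in> I}"

text \<open>Elements of the algebraic tensor product (A/I) \<otimes> (A/I) are represented by finite lists of
  pairs of representatives [(x_1,y_1),...] standing for \<Sum> (x_i+I) \<otimes> (y_i+I).
  Two lists represent the same tensor iff every bilinear form on (A/I) \<times> (A/I) takes the same
  value on them (the algebraic dual of the tensor product is the space of bilinear forms).\<close>
definition quot_bilinear :: "'a::real_algebra set \<Rightarrow> ('a \<Rightarrow> 'a \<Rightarrow> real) \<Rightarrow> bool" where
  "quot_bilinear I \<beta> \<longleftrightarrow>
     (\<forall>x x' y. \<beta> (x + x') y = \<beta> x y + \<beta> x' y) \<and> (\<forall>r x y. \<beta> (r *\<^sub>R x) y = r * \<beta> x y) \<and>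
     (\<forall>x y y'. \<beta> x (y + y') = \<beta> x y + \<beta> x y') \<and> (\<forall>r x y. \<beta> x (r *\<^sub>R y) = r * \<beta> x y) \<and>
     (\<forall>x y. x \<in> I \<or> y \<in> I \<longrightarrow> \<beta> x y = 0)"

definition tensor_eq :: "'a::real_algebra set \<Rightarrow> ('a \<times> 'a) list \<Rightarrow> ('a \<times> 'a) list \<Rightarrow> bool" where
  "tensor_eq I L L' \<longleftrightarrow> (\<forall>\<beta>. quot_bilinear I \<beta> \<longrightarrow>
      (\<Sum>(x,y)\<leftarrow>L. \<beta> x y) = (\<Sum>(x,y)\<leftarrow>L'. \<beta> x y))"

definition tsn :: "(nat \<Rightarrow> 'a::real_algebra \<Rightarrow> real) \<Rightarrow> 'a set \<Rightarrow> nat \<Rightarrow> ('a \<times> 'a) list \<Rightarrow> real" where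
  "tsn p I n L = Inf {(\<Sum>(x,y)\<leftarrow>L'. qsn p I n x * qsn p I n y) | L'. tensor_eq I L L'}"

definition tdiff :: "('a::real_algebra \<times> 'a) list \<Rightarrow> ('a \<times> 'a) list \<Rightarrow> ('a \<times> 'a) list" where
  "tdiff L L' = L @ map (\<lambda>(x,y). (- x, y)) L'"

definition lmod :: "'a::real_algebra \<Rightarrow> ('a \<times> 'a) list \<Rightarrow> ('a \<times> 'a) list" where
  "lmod a L = map (\<lambda>(x,y). (a * x, y)) L"

definition rmod :: "('a::real_algebra \<times> 'a) list \<Rightarrow> 'a \<Rightarrow> ('a \<times> 'a) list" where
  "rmod L a = map (\<lambda>(x,y). (x, y * a)) L"

definition tpi :: "('a::real_algebra \<times> 'a) list \<Rightarrow> 'a" where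
  "tpi L = (\<Sum>(x,y)\<leftarrow>L. x * y)"

text \<open>Elements of the completed projective tensor product are represented by sequences of
  algebraic tensors that are Cauchy for every \<open>r\<^sup>^_n\<close> (completion by Cauchy sequences);
  seminorms and all continuous expressions are evaluated as limits along the sequence.\<close>
definition tcauchy :: "(nat \<Rightarrow> 'a::real_algebra \<Rightarrow> real) \<Rightarrow> 'a set \<Rightarrow> (nat \<Rightarrow> ('a \<times> 'a) list) \<Rightarrow> bool" where
  "tcauchy p I M \<longleftrightarrow> (\<forall>n \<epsilon>. \<epsilon> > 0 \<longrightarrow> (\<exists>K. \<forall>j\<ge>K. \<forall>k\<ge>K. tsn p I n (tdiff (M j) (M k)) < \<epsilon>))"

definition has_lbad :: "(nat \<Rightarrow> 'a::real_algebra \<Rightarrow> real) \<Rightarrow> 'a set \<Rightarrow> bool" where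
  "has_lbad p I \<longleftrightarrow> (\<exists>C :: nat \<Rightarrow> real. (\<forall>n. C n > 0) \<and>
     (\<forall>F n \<epsilon>. finite F \<and> F \<subseteq> - I \<and> \<epsilon> > 0 \<longrightarrow>
        (\<exists>M. tcauchy p I M \<and>
             lim (\<lambda>k. tsn p I n (M k)) \<le> C n \<and>
             (\<forall>a\<in>F. lim (\<lambda>k. tsn p I n (tdiff (lmod a (M k)) (rmod (M k) a))) < \<epsilon>) \<and>
             (\<forall>a. lim (\<lambda>k. qsn p I n (a * tpi (M k) - a)) < \<epsilon>))))"

end

theory Submission
  imports Defs Complex_Main
begin

text \<open>By continuity, every seminorm \<open>q\<^sub>m\<close> of \<open>\<B>\<close> is dominated on the image of \<open>\<phi>\<close> by a multiple
  \<open>c\<^sub>m p\<^sub>n\<^sub>(\<^sub>m\<^sub>)\<close> of a seminorm of \<open>\<A>\<close>; since \<open>\<phi>(I) \<subseteq> J\<close> the same bound holds for the quotient seminorms,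
  and \<open>c\<^sub>m\<^sup>2\<close> bounds the induced map on the projective tensor products. Given a finite set \<open>F\<close> in \<open>\<B>\<close>,
  approximate each \<open>b \<in> F\<close> by some \<open>\<phi>(a)\<close> using density, take an approximate diagonal \<open>M\<close> of \<open>\<A>\<close>
  for these \<open>a\<close> and push it forward along \<open>\<phi> \<otimes> \<phi>\<close>. The errors introduced by replacing \<open>b\<close> with
  \<open>\<phi>(a)\<close> are controlled by \<open>q\<^sub>m(b - \<phi>(a))\<close> times the uniform bound \<open>C\<^sub>n\<close> on \<open>M\<close>, so the bounds
  \<open>c\<^sub>m\<^sup>2 C\<^sub>n\<^sub>(\<^sub>m\<^sub>)\<close> work for \<open>\<B>\<close> modulo \<open>J\<close>.\<close>

lemma linear_functional_separating_subspace:
  fixes S :: "'a::real_vector set"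
  assumes "subspace S" "v \<notin> S"
  shows "\<exists>f::'a \<Rightarrow> real. linear f \<and> (\<forall>x\<in>S. f x = 0) \<and> f v = 1"
proof -
  obtain B where B: "B \<subseteq> S" "independent B" "S \<subseteq> span B"
    by (rule maximal_independent_subset)
  have span_B: "span B = S" using B assms(1)
    by (metis span_eq_iff span_mono subset_antisym)
  have "independent (insert v B)" using B assms span_B by (simp add: independent_insertI)
  from real_vector.linear_independent_extend[OF this, of "\<lambda>x. if x = v then (1::real) else 0"]
  obtain g :: "'a \<Rightarrow> real"
    where g: "linear g" "\<And>x. x \<in> insert v B \<Longrightarrow> g x = (if x = v then 1 else 0)"
    by blast
  have "\<And>x. x \<in> B \<Longrightarrow> g x = 0" using g B assms by auto
  then have "\<And>x. x \<in> span B \<Longrightarrow> g x = 0"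
    by (rule real_vector.linear_eq_0_on_span[OF g(1)])
  then show ?thesis using g span_B by auto
qed

lemma le_mult_cInf:
  fixes S :: "real set"
  assumes "S \<noteq> {}" "K \<ge> 0" "\<And>v. v \<in> S \<Longrightarrow> z \<le> K * v"
  shows "z \<le> K * Inf S"
proof (cases "K = 0")
  case True
  then show ?thesis using assms(1,3) by force
next
  case False
  with assms(2) have K: "K > 0" by simp
  have "z / K \<le> Inf S"
    by (rule cInf_greatest[OF assms(1)]) (use assms(3) K in \<open>simp add: divide_le_eq mult.commute\<close>)
  then show ?thesis using K by (simp add: divide_le_eq mult.commute)
qed

lemma lim_le_LIMSEQ:
  fixes X Y :: "nat \<Rightarrow> real"
  assumes "\<And>k. X k \<le> Y k" "convergent X" "Y \<longlonglongrightarrow> y"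
  shows "lim X \<le> y"
  using LIMSEQ_le[OF assms(2)[unfolded convergent_LIMSEQ_iff] assms(3)] assms(1) by blast

context
  fixes f :: "'a::real_algebra \<Rightarrow> 'b::real_algebra"
  assumes hom: "alg_hom f"
begin

lemma alg_hom_add: "f (x + y) = f x + f y" using hom by (simp add: alg_hom_def)
lemma alg_hom_scaleR: "f (r *\<^sub>R x) = r *\<^sub>R f x" using hom by (simp add: alg_hom_def)
lemma alg_hom_mult: "f (x * y) = f x * f y" using hom by (simp add: alg_hom_def)
lemma alg_hom_zero: "f 0 = 0" using alg_hom_scaleR[of 0 0] by simp
lemma alg_hom_minus: "f (- x) = - f x" using alg_hom_scaleR[of "-1" x] by simp
lemma alg_hom_diff: "f (x - y) = f x - f y" using alg_hom_add[of x "-y"] by (simp add: alg_hom_minus)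

end

subsection \<open>Finite tensors as lists of pairs\<close>

definition tensor_pairing :: "('a \<Rightarrow> 'a \<Rightarrow> real) \<Rightarrow> ('a \<times> 'a) list \<Rightarrow> real" where
  "tensor_pairing \<beta> L = (\<Sum>(x,y)\<leftarrow>L. \<beta> x y)"

lemma tensor_pairing_Nil[simp]: "tensor_pairing \<beta> [] = 0"
  by (simp add: tensor_pairing_def)
lemma tensor_pairing_Cons[simp]: "tensor_pairing \<beta> ((x,y) # L) = \<beta> x y + tensor_pairing \<beta> L"
  by (simp add: tensor_pairing_def)
lemma tensor_pairing_append[simp]:
  "tensor_pairing \<beta> (L @ L') = tensor_pairing \<beta> L + tensor_pairing \<beta> L'"
  by (simp add: tensor_pairing_def)

lemma tensor_eq_iff_pairing:
  "tensor_eq I L L' \<longleftrightarrow> (\<forall>\<beta>. quot_bilinear I \<beta> \<longrightarrow> tensor_pairing \<beta> L = tensor_pairing \<beta> L')"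
  by (simp add: tensor_eq_def tensor_pairing_def)

lemma tensor_eq_refl[simp]: "tensor_eq I L L"
  by (simp add: tensor_eq_def)
lemma tensor_eq_sym: "tensor_eq I L L' \<Longrightarrow> tensor_eq I L' L"
  by (simp add: tensor_eq_def)
lemma tensor_eq_trans: "tensor_eq I L L' \<Longrightarrow> tensor_eq I L' L'' \<Longrightarrow> tensor_eq I L L''"
  by (simp add: tensor_eq_def)

lemma quot_bilinear_minus_left: "quot_bilinear I \<beta> \<Longrightarrow> \<beta> (- x) y = - \<beta> x y"
  unfolding quot_bilinear_def by (metis mult_minus1 scaleR_minus1_left)
lemma quot_bilinear_diff_left: "quot_bilinear I \<beta> \<Longrightarrow> \<beta> (u - v) y = \<beta> u y - \<beta> v y"
  unfolding quot_bilinear_def by (metis add_diff_cancel_right' diff_add_cancel eq_diff_eq)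
lemma quot_bilinear_diff_right: "quot_bilinear I \<beta> \<Longrightarrow> \<beta> x (u - v) = \<beta> x u - \<beta> x v"
  unfolding quot_bilinear_def by (metis add_diff_cancel_right' diff_add_cancel eq_diff_eq)

definition tneg :: "('a::real_algebra \<times> 'a) list \<Rightarrow> ('a \<times> 'a) list" where
  "tneg L = map (\<lambda>(x,y). (- x, y)) L"

lemma tneg_Nil[simp]: "tneg [] = []" by (simp add: tneg_def)
lemma tneg_Cons[simp]: "tneg ((x,y) # L) = (- x, y) # tneg L" by (simp add: tneg_def)
lemma tneg_append[simp]: "tneg (L @ L') = tneg L @ tneg L'" by (simp add: tneg_def)
lemma tdiff_eq_append_tneg: "tdiff L L' = L @ tneg L'" by (simp add: tdiff_def tneg_def)

lemma tensor_pairing_tneg[simp]: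
  "quot_bilinear I \<beta> \<Longrightarrow> tensor_pairing \<beta> (tneg L) = - tensor_pairing \<beta> L"
  by (induction L) (auto simp: quot_bilinear_minus_left)

lemma tpi_Nil[simp]: "tpi [] = 0" by (simp add: tpi_def)
lemma tpi_Cons[simp]: "tpi ((x,y) # L) = x * y + tpi L" by (simp add: tpi_def)
lemma tpi_append[simp]: "tpi (L @ L') = tpi L + tpi L'" by (simp add: tpi_def)
lemma tpi_tneg[simp]: "tpi (tneg L) = - tpi L" by (induction L) auto
lemma tpi_tdiff: "tpi (tdiff L L') = tpi L - tpi L'" by (simp add: tdiff_eq_append_tneg)

lemma lmod_Nil[simp]: "lmod a [] = []" by (simp add: lmod_def)
lemma lmod_Cons[simp]: "lmod a ((x,y) # L) = (a * x, y) # lmod a L" by (simp add: lmod_def)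
lemma lmod_append[simp]: "lmod a (L @ L') = lmod a L @ lmod a L'" by (simp add: lmod_def)
lemma lmod_tneg[simp]: "lmod a (tneg L) = tneg (lmod a L)" by (induction L) auto
lemma rmod_Nil[simp]: "rmod [] a = []" by (simp add: rmod_def)
lemma rmod_Cons[simp]: "rmod ((x,y) # L) a = (x, y * a) # rmod L a" by (simp add: rmod_def)
lemma rmod_append[simp]: "rmod (L @ L') a = rmod L a @ rmod L' a" by (simp add: rmod_def)
lemma rmod_tneg[simp]: "rmod (tneg L) a = tneg (rmod L a)" by (induction L) auto

lemma tensor_pairing_lmod: "tensor_pairing \<beta> (lmod a L) = tensor_pairing (\<lambda>x y. \<beta> (a * x) y) L"
  by (induction L) auto
lemma tensor_pairing_rmod: "tensor_pairing \<beta> (rmod L a) = tensor_pairing (\<lambda>x y. \<beta> x (y * a)) L"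
  by (induction L) auto

definition tcomm :: "'a::real_algebra \<Rightarrow> ('a \<times> 'a) list \<Rightarrow> ('a \<times> 'a) list" where
  "tcomm a L = tdiff (lmod a L) (rmod L a)"

definition tmap :: "('a \<Rightarrow> 'b) \<Rightarrow> ('a \<times> 'a) list \<Rightarrow> ('b \<times> 'b) list" where
  "tmap f L = map (\<lambda>(x,y). (f x, f y)) L"

lemma tmap_Nil[simp]: "tmap f [] = []" by (simp add: tmap_def)
lemma tmap_Cons[simp]: "tmap f ((x,y) # L) = (f x, f y) # tmap f L" by (simp add: tmap_def)
lemma tmap_append[simp]: "tmap f (L @ L') = tmap f L @ tmap f L'" by (simp add: tmap_def)

lemma tensor_pairing_tmap: "tensor_pairing \<beta> (tmap f L) = tensor_pairing (\<lambda>x y. \<beta> (f x) (f y)) L"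
  by (induction L) auto

context
  fixes f :: "'a::real_algebra \<Rightarrow> 'b::real_algebra"
  assumes hom: "alg_hom f"
begin

lemma tmap_tneg[simp]: "tmap f (tneg L) = tneg (tmap f L)"
  by (induction L) (auto simp: alg_hom_minus[OF hom])
lemma tmap_tdiff: "tmap f (tdiff L L') = tdiff (tmap f L) (tmap f L')"
  by (simp add: tdiff_eq_append_tneg)
lemma tmap_tcomm: "tmap f (tcomm a L) = tcomm (f a) (tmap f L)"
proof -
  have "tmap f (lmod a L) = lmod (f a) (tmap f L)"
    by (induction L) (auto simp: alg_hom_mult[OF hom])
  moreover have "tmap f (rmod L a) = rmod (tmap f L) (f a)"
    by (induction L) (auto simp: alg_hom_mult[OF hom])
  ultimately show ?thesis by (simp add: tcomm_def tmap_tdiff)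
qed

lemma tpi_tmap: "tpi (tmap f L) = f (tpi L)"
  by (induction L) (auto simp: alg_hom_add[OF hom] alg_hom_mult[OF hom] alg_hom_zero[OF hom])

end

subsection \<open>Seminorms of a Frechet algebra\<close>

locale frechet_seminorms =
  fixes p :: "nat \<Rightarrow> 'a::real_algebra \<Rightarrow> real"
  assumes frechet: "frechet_algebra p"
begin

lemma p_triangle: "p n (x + y) \<le> p n x + p n y"
  using frechet unfolding frechet_algebra_def seminorm_def by blast
lemma p_scaleR: "p n (r *\<^sub>R x) = \<bar>r\<bar> * p n x"
  using frechet unfolding frechet_algebra_def seminorm_def by blast
lemma p_mult: "p n (x * y) \<le> p n x * p n y"
  using frechet unfolding frechet_algebra_def by blast
lemma p_zero[simp]: "p n 0 = 0"
  using p_scaleR[of n 0 0] by simp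
lemma p_minus[simp]: "p n (- x) = p n x"
  using p_scaleR[of n "-1" x] by simp
lemma p_nonneg: "0 \<le> p n x"
  using p_triangle[of n x "- x"] by simp
lemma p_minus_commute: "p n (x - y) = p n (y - x)"
  by (metis minus_diff_eq p_minus)

lemma sn_open_ball: "sn_open p {y. p n (y - x) < r}"
  unfolding sn_open_def
proof
  fix z assume z: "z \<in> {y. p n (y - x) < r}"
  have "p n (y - x) < r" if "p n (y - z) < r - p n (z - x)" for y
    using p_triangle[of n "y - z" "z - x"] that by simp
  then have "{y. p n (y - z) < r - p n (z - x)} \<subseteq> {y. p n (y - x) < r}"
    by blast
  with z show "\<exists>n' \<epsilon>. \<epsilon> > 0 \<and> {y. p n' (y - z) < \<epsilon>} \<subseteq> {y. p n (y - x) < r}"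
    by (intro exI[of _ n] exI[of _ "r - p n (z - x)"]) auto
qed

lemma dense_approx:
  assumes "sn_dense p S" "\<delta> > 0"
  shows "\<exists>a\<in>S. p n (b - a) < \<delta>"
proof -
  have "b \<in> {y. p n (y - b) < \<delta>}" using assms(2) by simp
  then have "{y. p n (y - b) < \<delta>} \<inter> S \<noteq> {}"
    using assms(1) sn_open_ball unfolding sn_dense_def by blast
  then show ?thesis using p_minus_commute by auto
qed

end

lemma continuous_seminorm_bound:
  assumes "frechet_seminorms p" "frechet_seminorms q" "alg_hom f" "sn_continuous p q f"
  shows "\<exists>n c. c > 0 \<and> (\<forall>x. q m (f x) \<le> c * p n x)"
proof -
  interpret A: frechet_seminorms p by (fact assms(1))
  interpret B: frechet_seminorms q by (fact assms(2))
  have "sn_open p (f -` {y. q m (y - 0) < 1})"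
    using assms(4) B.sn_open_ball unfolding sn_continuous_def by blast
  moreover have "0 \<in> f -` {y. q m (y - 0) < 1}"
    by (simp add: alg_hom_zero[OF assms(3)])
  ultimately obtain n \<epsilon> where \<epsilon>: "\<epsilon> > 0" "{y. p n (y - 0) < \<epsilon>} \<subseteq> f -` {y. q m (y - 0) < 1}"
    unfolding sn_open_def by blast
  have scaled_small: "t * q m (f x) < 1" if "t > 0" "t * p n x < \<epsilon>" for t x
    using subsetD[OF \<epsilon>(2), of "t *\<^sub>R x"] that by (auto simp: A.p_scaleR B.p_scaleR alg_hom_scaleR[OF assms(3)])
  have "q m (f x) \<le> (2 / \<epsilon>) * p n x" for x
  proof (cases "p n x = 0")
    case True
    have "\<not> q m (f x) > 0"
    proof
      assume "q m (f x) > 0"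
      with scaled_small[of "2 / q m (f x)" x] True \<epsilon>(1) show False by simp
    qed
    with True B.p_nonneg[of m "f x"] show ?thesis by simp
  next
    case False
    then have px: "p n x > 0" using A.p_nonneg[of n x] by simp
    have "(\<epsilon> / (2 * p n x)) * q m (f x) < 1"
      using scaled_small[of "\<epsilon> / (2 * p n x)" x] px \<epsilon>(1) by simp
    then show ?thesis using px \<epsilon>(1) by (simp add: field_simps)
  qed
  then show ?thesis using \<epsilon>(1) by (intro exI[of _ n] exI[of _ "2 / \<epsilon>"]) auto
qed

subsection \<open>Quotient seminorms\<close>

locale frechet_quotient = frechet_seminorms p
  for p :: "nat \<Rightarrow> 'a::real_algebra \<Rightarrow> real" +
  fixes I :: "'a set"
  assumes ideal: "two_sided_ideal I"
begin

lemma ideal_zero: "0 \<in> I"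
  using ideal by (simp add: two_sided_ideal_def)
lemma ideal_add: "x \<in> I \<Longrightarrow> y \<in> I \<Longrightarrow> x + y \<in> I"
  using ideal by (simp add: two_sided_ideal_def)
lemma ideal_scaleR: "x \<in> I \<Longrightarrow> r *\<^sub>R x \<in> I"
  using ideal by (simp add: two_sided_ideal_def)
lemma ideal_minus: "x \<in> I \<Longrightarrow> - x \<in> I"
  using ideal_scaleR[of x "-1"] by simp
lemma ideal_mult_left: "x \<in> I \<Longrightarrow> a * x \<in> I"
  using ideal by (simp add: two_sided_ideal_def)
lemma ideal_mult_right: "x \<in> I \<Longrightarrow> x * a \<in> I"
  using ideal by (simp add: two_sided_ideal_def)
lemma subspace_ideal: "subspace I"
  using ideal_zero ideal_add ideal_scaleR by (simp add: subspace_def)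

lemma qsn_le: "b \<in> I \<Longrightarrow> qsn p I n x \<le> p n (x + b)"
  unfolding qsn_def by (rule cInf_lower) (auto intro: bdd_belowI[of _ 0] simp: p_nonneg)

lemma qsn_ge_scaled:
  "K \<ge> 0 \<Longrightarrow> (\<And>b. b \<in> I \<Longrightarrow> z \<le> K * p n (x + b)) \<Longrightarrow> z \<le> K * qsn p I n x"
  unfolding qsn_def by (rule le_mult_cInf) (use ideal_zero in blast)+

lemma qsn_greatest: "(\<And>b. b \<in> I \<Longrightarrow> z \<le> p n (x + b)) \<Longrightarrow> z \<le> qsn p I n x"
  using qsn_ge_scaled[of 1] by simp

lemma qsn_nonneg: "0 \<le> qsn p I n x"
  by (rule qsn_greatest) (simp add: p_nonneg)
lemma qsn_le_seminorm: "qsn p I n x \<le> p n x"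
  using qsn_le[OF ideal_zero] by simp
lemma qsn_ideal: "x \<in> I \<Longrightarrow> qsn p I n x = 0"
  using qsn_le[OF ideal_minus, of x n x] qsn_nonneg[of n x] by simp

lemma qsn_triangle: "qsn p I n (x + y) \<le> qsn p I n x + qsn p I n y"
proof -
  have "qsn p I n (x + y) - p n (y + b') \<le> p n (x + b)" if "b \<in> I" "b' \<in> I" for b b'
  proof -
    have "qsn p I n (x + y) \<le> p n ((x + y) + (b + b'))"
      using qsn_le ideal_add that by blast
    also have "(x + y) + (b + b') = (x + b) + (y + b')"
      by (simp add: algebra_simps)
    finally show ?thesis using p_triangle[of n "x + b" "y + b'"] by simp
  qed
  then have "qsn p I n (x + y) - p n (y + b') \<le> qsn p I n x" if "b' \<in> I" for b'
    using that by (blast intro: qsn_greatest)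
  then have "qsn p I n (x + y) - qsn p I n x \<le> qsn p I n y"
    by (force intro: qsn_greatest)
  then show ?thesis by simp
qed

lemma qsn_minus[simp]: "qsn p I n (- x) = qsn p I n x"
proof -
  have "qsn p I n (- x) \<le> qsn p I n x" for x
  proof (rule qsn_greatest)
    fix b assume "b \<in> I"
    then have "qsn p I n (- x) \<le> p n (- x + - b)" using qsn_le ideal_minus by blast
    also have "\<dots> = p n (x + b)" by (metis minus_add_distrib p_minus)
    finally show "qsn p I n (- x) \<le> p n (x + b)" .
  qed
  from this[of x] this[of "- x"] show ?thesis by simp
qed

lemma qsn_diff_le: "qsn p I n (x - y) \<le> qsn p I n x + qsn p I n y"
  using qsn_triangle[of n x "- y"] by simp

lemma qsn_abs_diff_le: "\<bar>qsn p I n x - qsn p I n y\<bar> \<le> qsn p I n (x - y)"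
  using qsn_triangle[of n "x - y" y] qsn_triangle[of n "y - x" x] qsn_minus[of n "x - y"]
  by (simp add: abs_le_iff)

lemma qsn_cong: "x - y \<in> I \<Longrightarrow> qsn p I n x = qsn p I n y"
  using qsn_abs_diff_le[of n x y] qsn_ideal by fastforce

lemma qsn_mult: "qsn p I n (x * y) \<le> qsn p I n x * qsn p I n y"
proof -
  have "qsn p I n (x * y) \<le> p n (x + b) * p n (y + b')" if "b \<in> I" "b' \<in> I" for b b'
  proof -
    have "x * b' + b * y + b * b' \<in> I"
      using that by (intro ideal_add ideal_mult_left ideal_mult_right)
    then have "qsn p I n (x * y) \<le> p n (x * y + (x * b' + b * y + b * b'))"
      by (rule qsn_le)
    also have "x * y + (x * b' + b * y + b * b') = (x + b) * (y + b')"
      by (simp add: algebra_simps)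
    finally show ?thesis using p_mult order_trans by blast
  qed
  then have "qsn p I n (x * y) \<le> p n (x + b) * qsn p I n y" if "b \<in> I" for b
    using that p_nonneg by (intro qsn_ge_scaled) auto
  then have "qsn p I n (x * y) \<le> qsn p I n y * qsn p I n x"
    using qsn_nonneg by (intro qsn_ge_scaled) (auto simp: mult.commute)
  then show ?thesis by (simp add: mult.commute)
qed

lemma qsn_mult_left: "qsn p I n (a * x) \<le> p n a * qsn p I n x"
  using qsn_mult[of n a x] qsn_le_seminorm[of n a] qsn_nonneg[of n x]
  by (meson mult_right_mono order_trans)
lemma qsn_mult_right: "qsn p I n (x * a) \<le> qsn p I n x * p n a"
  using qsn_mult[of n x a] qsn_le_seminorm[of n a] qsn_nonneg[of n x]
  by (meson mult_left_mono order_trans)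

end

subsection \<open>The projective tensor seminorm\<close>

definition tensor_cost :: "(nat \<Rightarrow> 'a::real_algebra \<Rightarrow> real) \<Rightarrow> 'a set \<Rightarrow> nat \<Rightarrow> ('a \<times> 'a) list \<Rightarrow> real"
  where "tensor_cost p I n L = (\<Sum>(x,y)\<leftarrow>L. qsn p I n x * qsn p I n y)"

lemma tensor_cost_Nil[simp]: "tensor_cost p I n [] = 0"
  by (simp add: tensor_cost_def)
lemma tensor_cost_Cons[simp]:
  "tensor_cost p I n ((x,y) # L) = qsn p I n x * qsn p I n y + tensor_cost p I n L"
  by (simp add: tensor_cost_def)

lemma tensor_cost_append[simp]:
  "tensor_cost p I n (L @ L') = tensor_cost p I n L + tensor_cost p I n L'"
  by (simp add: tensor_cost_def)

lemma tsn_eq_Inf_tensor_cost: "tsn p I n L = Inf {tensor_cost p I n L' | L'. tensor_eq I L L'}"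
  by (simp add: tsn_def tensor_cost_def)

context frechet_quotient
begin

lemma tensor_cost_nonneg: "0 \<le> tensor_cost p I n L"
  by (induction L) (auto simp: qsn_nonneg)

lemma tsn_le_tensor_cost: "tensor_eq I L L' \<Longrightarrow> tsn p I n L \<le> tensor_cost p I n L'"
  unfolding tsn_eq_Inf_tensor_cost
  by (rule cInf_lower) (auto intro: bdd_belowI[of _ 0] simp: tensor_cost_nonneg)

lemma tsn_ge_scaled:
  "K \<ge> 0 \<Longrightarrow> (\<And>L'. tensor_eq I L L' \<Longrightarrow> z \<le> K * tensor_cost p I n L') \<Longrightarrow> z \<le> K * tsn p I n L"
  unfolding tsn_eq_Inf_tensor_cost by (rule le_mult_cInf) (use tensor_eq_refl in blast)+

lemma tsn_greatest: "(\<And>L'. tensor_eq I L L' \<Longrightarrow> z \<le> tensor_cost p I n L') \<Longrightarrow> z \<le> tsn p I n L"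
  using tsn_ge_scaled[of 1] by simp

lemma tsn_nonneg: "0 \<le> tsn p I n L"
  by (rule tsn_greatest) (simp add: tensor_cost_nonneg)

lemma tsn_Nil[simp]: "tsn p I n [] = 0"
  using tsn_le_tensor_cost[of "[]" "[]" n] tsn_nonneg[of n "[]"] by simp

lemma tsn_cong: "tensor_eq I L L' \<Longrightarrow> tsn p I n L = tsn p I n L'"
  unfolding tsn_eq_Inf_tensor_cost by (metis tensor_eq_sym tensor_eq_trans)

lemma tsn_append: "tsn p I n (L1 @ L2) \<le> tsn p I n L1 + tsn p I n L2"
proof -
  have "tsn p I n (L1 @ L2) - tensor_cost p I n B \<le> tensor_cost p I n A"
    if "tensor_eq I L1 A" "tensor_eq I L2 B" for A B
  proof -
    have "tensor_eq I (L1 @ L2) (A @ B)"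
      using that by (simp add: tensor_eq_iff_pairing)
    then have "tsn p I n (L1 @ L2) \<le> tensor_cost p I n (A @ B)"
      by (rule tsn_le_tensor_cost)
    then show ?thesis by simp
  qed
  then have "tsn p I n (L1 @ L2) - tensor_cost p I n B \<le> tsn p I n L1" if "tensor_eq I L2 B" for B
    using that by (blast intro: tsn_greatest)
  then have "tsn p I n (L1 @ L2) - tsn p I n L1 \<le> tsn p I n L2"
    by (force intro: tsn_greatest)
  then show ?thesis by simp
qed

lemma tsn_tneg[simp]: "tsn p I n (tneg L) = tsn p I n L"
proof -
  have "tensor_cost p I n (tneg L) = tensor_cost p I n L" for L
    by (induction L) auto
  moreover have "tensor_eq I (tneg L) (tneg L') \<longleftrightarrow> tensor_eq I L L'" for L L'
    by (auto simp: tensor_eq_iff_pairing)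
  moreover have "tneg (tneg L) = L" for L :: "('a \<times> 'a) list"
    by (induction L) auto
  ultimately show ?thesis
    unfolding tsn_eq_Inf_tensor_cost by metis
qed

lemma tsn_abs_diff_le: "\<bar>tsn p I n L - tsn p I n L'\<bar> \<le> tsn p I n (tdiff L L')"
proof -
  have "tensor_eq I L (tdiff L L' @ L')" "tensor_eq I L' (tneg (tdiff L L') @ L)"
    by (auto simp: tensor_eq_iff_pairing tdiff_eq_append_tneg)
  then show ?thesis
    using tsn_cong tsn_append tsn_tneg by (smt (verit))
qed

text \<open>Representations of the same tensor have diagonals congruent modulo \<open>I\<close>: otherwise a linear
  functional vanishing on \<open>I\<close> but not on the difference gives the bilinear form \<open>f(x y)\<close> that
  separates them.\<close>
lemma tpi_cong: "tensor_eq I L L' \<Longrightarrow> tpi L - tpi L' \<in> I"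
proof (rule ccontr)
  assume eq: "tensor_eq I L L'" and "tpi L - tpi L' \<notin> I"
  then obtain f :: "'a \<Rightarrow> real"
    where f: "linear f" "\<forall>x\<in>I. f x = 0" "f (tpi L - tpi L') = 1"
    using linear_functional_separating_subspace[OF subspace_ideal] by blast
  have "quot_bilinear I (\<lambda>x y. f (x * y))"
    using f(1,2) unfolding quot_bilinear_def linear_iff
    by (auto simp: distrib_left distrib_right ideal_mult_left ideal_mult_right)
  moreover have "tensor_pairing (\<lambda>x y. f (x * y)) L = f (tpi L)" for L
    using f(1) by (induction L) (auto simp: linear_iff linear_0)
  ultimately have "f (tpi L) = f (tpi L')"
    using eq unfolding tensor_eq_iff_pairing by metis
  with f(1,3) show False by (simp add: linear_diff)
qed

lemma qsn_tpi_le_tsn: "qsn p I n (tpi L) \<le> tsn p I n L"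
proof (rule tsn_greatest)
  have qsn_tpi_le_cost: "qsn p I n (tpi L') \<le> tensor_cost p I n L'" for L'
  proof (induction L')
    case Nil
    then show ?case using qsn_ideal[OF ideal_zero] by simp
  next
    case (Cons xy L')
    obtain x y where "xy = (x, y)" by force
    with Cons show ?case
      using qsn_triangle[of n "x * y" "tpi L'"] qsn_mult[of n x y] by simp
  qed
  fix L' assume "tensor_eq I L L'"
  then have "qsn p I n (tpi L) = qsn p I n (tpi L')"
    using tpi_cong qsn_cong by blast
  then show "qsn p I n (tpi L) \<le> tensor_cost p I n L'"
    using qsn_tpi_le_cost by simp
qed

lemma tsn_lmod: "tsn p I n (lmod a L) \<le> p n a * tsn p I n L"
proof (rule tsn_ge_scaled[OF p_nonneg])
  have cost: "tensor_cost p I n (lmod a L') \<le> p n a * tensor_cost p I n L'" for L'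
  proof (induction L')
    case (Cons xy L')
    obtain x y where "xy = (x, y)" by force
    moreover have "qsn p I n (a * x) * qsn p I n y \<le> p n a * qsn p I n x * qsn p I n y"
      using qsn_mult_left qsn_nonneg by (simp add: mult_right_mono)
    ultimately show ?case using Cons by (simp add: distrib_left mult.assoc)
  qed simp
  fix L' assume "tensor_eq I L L'"
  then have "tensor_eq I (lmod a L) (lmod a L')"
    unfolding tensor_eq_iff_pairing tensor_pairing_lmod
    by (auto simp: quot_bilinear_def distrib_left ideal_mult_left)
  then show "tsn p I n (lmod a L) \<le> p n a * tensor_cost p I n L'"
    using tsn_le_tensor_cost cost order_trans by metis
qed

lemma tsn_rmod: "tsn p I n (rmod L a) \<le> p n a * tsn p I n L"
proof (rule tsn_ge_scaled[OF p_nonneg])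
  have cost: "tensor_cost p I n (rmod L' a) \<le> p n a * tensor_cost p I n L'" for L'
  proof (induction L')
    case (Cons xy L')
    obtain x y where "xy = (x, y)" by force
    moreover have "qsn p I n x * qsn p I n (y * a) \<le> qsn p I n x * (qsn p I n y * p n a)"
      using qsn_mult_right qsn_nonneg by (simp add: mult_left_mono)
    ultimately show ?case using Cons by (simp add: distrib_left mult_ac)
  qed simp
  fix L' assume "tensor_eq I L L'"
  then have "tensor_eq I (rmod L a) (rmod L' a)"
    unfolding tensor_eq_iff_pairing tensor_pairing_rmod
    by (auto simp: quot_bilinear_def distrib_right ideal_mult_right)
  then show "tsn p I n (rmod L a) \<le> p n a * tensor_cost p I n L'"
    using tsn_le_tensor_cost cost order_trans by metis
qed

lemma tsn_tcomm: "tsn p I n (tcomm a L) \<le> 2 * p n a * tsn p I n L"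
  using tsn_append[of n "lmod a L" "tneg (rmod L a)"] tsn_lmod[of n a L] tsn_rmod[of n L a]
  by (simp add: tcomm_def tdiff_eq_append_tneg)

lemma tsn_tcomm_ideal: "a \<in> I \<Longrightarrow> tsn p I n (tcomm a L) = 0"
proof -
  assume a: "a \<in> I"
  have "tensor_eq I (tcomm a L) []"
    unfolding tensor_eq_iff_pairing
  proof (intro allI impI)
    fix \<beta> assume \<beta>: "quot_bilinear I \<beta>"
    have "tensor_pairing \<beta> (lmod a L) = 0" "tensor_pairing \<beta> (rmod L a) = 0"
      using \<beta> a by (induction L) (auto simp: quot_bilinear_def ideal_mult_left ideal_mult_right)
    with \<beta> show "tensor_pairing \<beta> (tcomm a L) = tensor_pairing \<beta> []"
      by (simp add: tcomm_def tdiff_eq_append_tneg)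
  qed
  from tsn_cong[OF this] show ?thesis by simp
qed

lemma tsn_tcomm_perturb:
  "tsn p I n (tcomm b L) \<le> tsn p I n (tcomm a L) + 2 * p n (b - a) * tsn p I n L"
proof -
  have "tensor_eq I (tcomm b L) (tcomm a L @ tcomm (b - a) L)"
    unfolding tensor_eq_iff_pairing
  proof (intro allI impI)
    fix \<beta> assume \<beta>: "quot_bilinear I \<beta>"
    have "tensor_pairing \<beta> (lmod b L) = tensor_pairing \<beta> (lmod a L) + tensor_pairing \<beta> (lmod (b - a) L)"
      "tensor_pairing \<beta> (rmod L b) = tensor_pairing \<beta> (rmod L a) + tensor_pairing \<beta> (rmod L (b - a))"
      using \<beta> by (induction L)
        (auto simp: left_diff_distrib right_diff_distrib quot_bilinear_diff_left quot_bilinear_diff_right)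
    with \<beta> show "tensor_pairing \<beta> (tcomm b L) = tensor_pairing \<beta> (tcomm a L @ tcomm (b - a) L)"
      by (simp add: tcomm_def tdiff_eq_append_tneg)
  qed
  then show ?thesis
    using tsn_cong tsn_append tsn_tcomm[of n "b - a" L] by (smt (verit))
qed

lemma convergent_if_tsn_lipschitz:
  assumes "tcauchy p I M" "0 \<le> K" "\<And>L L'. \<bar>f L - f L'\<bar> \<le> K * tsn p I n (tdiff L L')"
  shows "convergent (\<lambda>k. f (M k))"
proof (rule Cauchy_convergent, rule metric_CauchyI)
  fix e :: real assume "0 < e"
  with assms(1,2) obtain N where N: "\<forall>j\<ge>N. \<forall>k\<ge>N. tsn p I n (tdiff (M j) (M k)) < e / (K + 1)"
    unfolding tcauchy_def by (meson add_nonneg_pos divide_pos_pos zero_less_one)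
  have "dist (f (M j)) (f (M k)) < e" if "N \<le> j" "N \<le> k" for j k
  proof -
    have "dist (f (M j)) (f (M k)) \<le> (K + 1) * tsn p I n (tdiff (M j) (M k))"
      using assms(3)[of "M j" "M k"] tsn_nonneg[of n "tdiff (M j) (M k)"]
      by (simp add: dist_real_def distrib_right)
    also have "\<dots> < (K + 1) * (e / (K + 1))"
      using N that assms(2) by (intro mult_strict_left_mono) auto
    finally show ?thesis using assms(2) by simp
  qed
  then show "\<exists>N. \<forall>j\<ge>N. \<forall>k\<ge>N. dist (f (M j)) (f (M k)) < e" by blast
qed

lemma convergent_tsn: "tcauchy p I M \<Longrightarrow> convergent (\<lambda>k. tsn p I n (M k))"
  by (rule convergent_if_tsn_lipschitz[where K = 1 and n = n and f = "tsn p I n"]) (auto simp: tsn_abs_diff_le)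

lemma convergent_tsn_tcomm:
  assumes "tcauchy p I M"
  shows "convergent (\<lambda>k. tsn p I n (tcomm a (M k)))"
proof (rule convergent_if_tsn_lipschitz[where K = "2 * p n a" and n = n and f = "\<lambda>L. tsn p I n (tcomm a L)"])
  fix L L'
  have "tensor_eq I (tdiff (tcomm a L) (tcomm a L')) (tcomm a (tdiff L L'))"
    by (simp add: tensor_eq_iff_pairing tcomm_def tdiff_eq_append_tneg)
  then show "\<bar>tsn p I n (tcomm a L) - tsn p I n (tcomm a L')\<bar> \<le> 2 * p n a * tsn p I n (tdiff L L')"
    using tsn_abs_diff_le[of n "tcomm a L" "tcomm a L'"] tsn_tcomm[of n a "tdiff L L'"] tsn_cong
    by fastforce
qed (simp_all add: assms p_nonneg)

lemma convergent_qsn_unit_defect: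
  assumes "tcauchy p I M"
  shows "convergent (\<lambda>k. qsn p I n (a * tpi (M k) - a))"
proof (rule convergent_if_tsn_lipschitz[where K = "p n a" and n = n and f = "\<lambda>L. qsn p I n (a * tpi L - a)"])
  fix L L'
  have "(a * tpi L - a) - (a * tpi L' - a) = a * tpi (tdiff L L')"
    by (simp add: tpi_tdiff algebra_simps)
  then have "\<bar>qsn p I n (a * tpi L - a) - qsn p I n (a * tpi L' - a)\<bar> \<le> qsn p I n (a * tpi (tdiff L L'))"
    by (metis qsn_abs_diff_le)
  also have "\<dots> \<le> p n a * qsn p I n (tpi (tdiff L L'))"
    by (rule qsn_mult_left)
  also have "\<dots> \<le> p n a * tsn p I n (tdiff L L')"
    by (rule mult_left_mono[OF qsn_tpi_le_tsn p_nonneg])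
  finally show "\<bar>qsn p I n (a * tpi L - a) - qsn p I n (a * tpi L' - a)\<bar> \<le> p n a * tsn p I n (tdiff L L')" .
qed (simp_all add: assms p_nonneg)

end

lemma (in frechet_quotient) lim_tsn_nonneg: "tcauchy p I M \<Longrightarrow> 0 \<le> lim (\<lambda>k. tsn p I n (M k))"
  using convergent_tsn[of M n] tsn_nonneg
  by (intro LIMSEQ_le_const[of "\<lambda>k. tsn p I n (M k)"]) (auto simp: convergent_LIMSEQ_iff)

lemma error_budget:
  fixes c C \<epsilon> :: real
  assumes "c > 0" "C \<ge> 0" "\<epsilon> > 0"
  obtains \<eta> \<delta> where "\<eta> > 0" "\<delta> > 0" "c\<^sup>2 * (\<eta> + 2 * \<delta> * C) \<le> \<epsilon>" "c * \<eta> + \<delta> * (c * C + 1) \<le> \<epsilon>"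
proof
  define K where "K = (c + 1)\<^sup>2 * (C + 1)"
  have K: "c\<^sup>2 \<le> K" "c\<^sup>2 * C \<le> K" "c \<le> K" "c * C + 1 \<le> K"
    using assms unfolding K_def power2_eq_square by (simp_all add: algebra_simps)
  have "K > 0" using assms unfolding K_def by simp
  define \<eta> \<delta> where "\<eta> = \<epsilon> / (2 * K)" and "\<delta> = \<epsilon> / (4 * K)"
  have "\<eta> > 0" "\<delta> > 0" "K * \<eta> = \<epsilon> / 2" "K * \<delta> = \<epsilon> / 4"
    using \<open>K > 0\<close> assms(3) by (simp_all add: \<eta>_def \<delta>_def)
  moreover have "c\<^sup>2 * \<eta> \<le> K * \<eta>" "c\<^sup>2 * C * \<delta> \<le> K * \<delta>" "c * \<eta> \<le> K * \<eta>"
    "(c * C + 1) * \<delta> \<le> K * \<delta>"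
    using K \<open>\<eta> > 0\<close> \<open>\<delta> > 0\<close> by (simp_all add: mult_right_mono)
  moreover have "c\<^sup>2 * (\<eta> + 2 * \<delta> * C) = c\<^sup>2 * \<eta> + 2 * (c\<^sup>2 * C * \<delta>)"
    "\<delta> * (c * C + 1) = (c * C + 1) * \<delta>"
    by (simp_all add: algebra_simps)
  ultimately show "\<eta> > 0" "\<delta> > 0" "c\<^sup>2 * (\<eta> + 2 * \<delta> * C) \<le> \<epsilon>" "c * \<eta> + \<delta> * (c * C + 1) \<le> \<epsilon>"
    using assms(3) by linarith+
qed

subsection \<open>Pushing tensors forward along a continuous homomorphism\<close>

locale frechet_quotient_morphism =
  A: frechet_quotient p I + B: frechet_quotient q J
  for p :: "nat \<Rightarrow> 'a::real_algebra \<Rightarrow> real" and I :: "'a set"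
    and q :: "nat \<Rightarrow> 'b::real_algebra \<Rightarrow> real" and J :: "'b set" +
  fixes \<phi> :: "'a \<Rightarrow> 'b" and lvl :: "nat \<Rightarrow> nat" and c :: "nat \<Rightarrow> real"
  assumes hom: "alg_hom \<phi>" and image_ideal: "\<phi> ` I \<subseteq> J"
    and c_pos: "0 < c m" and seminorm_bound: "q m (\<phi> x) \<le> c m * p (lvl m) x"
begin

lemma qsn_image_le: "qsn q J m (\<phi> x) \<le> c m * qsn p I (lvl m) x"
proof (rule A.qsn_ge_scaled[OF less_imp_le[OF c_pos]])
  fix b assume "b \<in> I"
  then have "qsn q J m (\<phi> x) \<le> q m (\<phi> x + \<phi> b)"
    using B.qsn_le image_ideal by blast
  also have "\<dots> \<le> c m * p (lvl m) (x + b)"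
    using seminorm_bound[of m "x + b"] by (simp add: alg_hom_add[OF hom])
  finally show "qsn q J m (\<phi> x) \<le> c m * p (lvl m) (x + b)" .
qed

lemma tsn_tmap_le: "tsn q J m (tmap \<phi> L) \<le> (c m)\<^sup>2 * tsn p I (lvl m) L"
proof (rule A.tsn_ge_scaled)
  have cost: "tensor_cost q J m (tmap \<phi> L') \<le> (c m)\<^sup>2 * tensor_cost p I (lvl m) L'" for L'
  proof (induction L')
    case (Cons xy L')
    obtain x y where "xy = (x, y)" by force
    moreover have "qsn q J m (\<phi> x) * qsn q J m (\<phi> y)
        \<le> (c m * qsn p I (lvl m) x) * (c m * qsn p I (lvl m) y)"
      using c_pos by (intro mult_mono qsn_image_le B.qsn_nonneg) (simp add: A.qsn_nonneg less_imp_le)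
    ultimately show ?case using Cons by (simp add: power2_eq_square distrib_left mult_ac)
  qed simp
  have "quot_bilinear I (\<lambda>x y. \<beta> (\<phi> x) (\<phi> y))" if "quot_bilinear J \<beta>" for \<beta>
    using that image_ideal unfolding quot_bilinear_def
    by (simp add: alg_hom_add[OF hom] alg_hom_scaleR[OF hom] image_subset_iff)
  moreover fix L' assume "tensor_eq I L L'"
  ultimately have "tensor_eq J (tmap \<phi> L) (tmap \<phi> L')"
    unfolding tensor_eq_iff_pairing tensor_pairing_tmap by blast
  then show "tsn q J m (tmap \<phi> L) \<le> (c m)\<^sup>2 * tensor_cost p I (lvl m) L'"
    using B.tsn_le_tensor_cost cost order_trans by metis
qed simp

lemma tcauchy_tmap:
  assumes "tcauchy p I M"
  shows "tcauchy q J (\<lambda>k. tmap \<phi> (M k))"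
  unfolding tcauchy_def
proof (intro allI impI)
  fix m and e :: real assume "e > 0"
  with assms c_pos[of m] obtain K
    where K: "\<forall>j\<ge>K. \<forall>k\<ge>K. tsn p I (lvl m) (tdiff (M j) (M k)) < e / (c m)\<^sup>2"
    unfolding tcauchy_def by (meson divide_pos_pos zero_less_power)
  have "tsn q J m (tdiff (tmap \<phi> (M j)) (tmap \<phi> (M k))) < e" if "K \<le> j" "K \<le> k" for j k
  proof -
    have "tsn q J m (tdiff (tmap \<phi> (M j)) (tmap \<phi> (M k)))
        \<le> (c m)\<^sup>2 * tsn p I (lvl m) (tdiff (M j) (M k))"
      using tsn_tmap_le by (simp add: tmap_tdiff[OF hom, symmetric])
    also have "\<dots> < (c m)\<^sup>2 * (e / (c m)\<^sup>2)"
      using K that c_pos[of m] by (intro mult_strict_left_mono) auto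
    finally show ?thesis using c_pos[of m] by simp
  qed
  then show "\<exists>K. \<forall>j\<ge>K. \<forall>k\<ge>K. tsn q J m (tdiff (tmap \<phi> (M j)) (tmap \<phi> (M k))) < e"
    by blast
qed

lemma lim_tsn_tmap_le:
  assumes "tcauchy p I M"
  shows "lim (\<lambda>k. tsn q J m (tmap \<phi> (M k))) \<le> (c m)\<^sup>2 * lim (\<lambda>k. tsn p I (lvl m) (M k))"
proof -
  have "(\<lambda>k. tsn p I (lvl m) (M k)) \<longlonglongrightarrow> lim (\<lambda>k. tsn p I (lvl m) (M k))"
    using A.convergent_tsn[OF assms] by (simp add: convergent_LIMSEQ_iff)
  then show ?thesis
    by (rule lim_le_LIMSEQ[OF tsn_tmap_le B.convergent_tsn[OF tcauchy_tmap[OF assms]] tendsto_mult_left])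
qed

lemma lim_tsn_tcomm_tmap_less:
  assumes M: "tcauchy p I M" and bound: "lim (\<lambda>k. tsn p I (lvl m) (M k)) \<le> C"
    and small: "lim (\<lambda>k. tsn p I (lvl m) (tcomm a (M k))) < \<eta>" and approx: "q m (b - \<phi> a) \<le> \<delta>"
  shows "lim (\<lambda>k. tsn q J m (tcomm b (tmap \<phi> (M k)))) < (c m)\<^sup>2 * (\<eta> + 2 * \<delta> * C)"
proof -
  define s where "s = lim (\<lambda>k. tsn p I (lvl m) (M k))"
  define t where "t = lim (\<lambda>k. tsn p I (lvl m) (tcomm a (M k)))"
  have pointwise: "tsn q J m (tcomm b (tmap \<phi> (M k)))
      \<le> (c m)\<^sup>2 * (tsn p I (lvl m) (tcomm a (M k)) + 2 * q m (b - \<phi> a) * tsn p I (lvl m) (M k))" for k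
  proof -
    have "tsn q J m (tcomm b (tmap \<phi> (M k)))
        \<le> tsn q J m (tmap \<phi> (tcomm a (M k))) + 2 * q m (b - \<phi> a) * tsn q J m (tmap \<phi> (M k))"
      using B.tsn_tcomm_perturb by (simp add: tmap_tcomm[OF hom])
    also have "\<dots> \<le> (c m)\<^sup>2 * tsn p I (lvl m) (tcomm a (M k))
        + 2 * q m (b - \<phi> a) * ((c m)\<^sup>2 * tsn p I (lvl m) (M k))"
      using tsn_tmap_le B.p_nonneg by (intro add_mono mult_left_mono) auto
    finally show ?thesis by (simp add: algebra_simps)
  qed
  have "(\<lambda>k. (c m)\<^sup>2 * (tsn p I (lvl m) (tcomm a (M k)) + 2 * q m (b - \<phi> a) * tsn p I (lvl m) (M k)))
      \<longlonglongrightarrow> (c m)\<^sup>2 * (t + 2 * q m (b - \<phi> a) * s)"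
    using A.convergent_tsn[OF M] A.convergent_tsn_tcomm[OF M]
    unfolding s_def t_def convergent_LIMSEQ_iff by (intro tendsto_intros)
  then have "lim (\<lambda>k. tsn q J m (tcomm b (tmap \<phi> (M k)))) \<le> (c m)\<^sup>2 * (t + 2 * q m (b - \<phi> a) * s)"
    by (rule lim_le_LIMSEQ[OF pointwise B.convergent_tsn_tcomm[OF tcauchy_tmap[OF M]]])
  also have "\<dots> < (c m)\<^sup>2 * (\<eta> + 2 * \<delta> * C)"
  proof -
    have "q m (b - \<phi> a) * s \<le> \<delta> * C"
      using approx bound B.p_nonneg[of m "b - \<phi> a"] A.lim_tsn_nonneg[OF M]
      by (intro mult_mono) (auto simp: s_def)
    then show ?thesis using small c_pos[of m] by (simp add: t_def)
  qed
  finally show ?thesis .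
qed

lemma lim_qsn_unit_defect_tmap_less:
  assumes M: "tcauchy p I M" and bound: "lim (\<lambda>k. tsn p I (lvl m) (M k)) \<le> C"
    and small: "lim (\<lambda>k. qsn p I (lvl m) (a * tpi (M k) - a)) < \<eta>" and approx: "q m (b - \<phi> a) \<le> \<delta>"
  shows "lim (\<lambda>k. qsn q J m (b * tpi (tmap \<phi> (M k)) - b)) < c m * \<eta> + \<delta> * (c m * C + 1)"
proof -
  define s where "s = lim (\<lambda>k. tsn p I (lvl m) (M k))"
  define t where "t = lim (\<lambda>k. qsn p I (lvl m) (a * tpi (M k) - a))"
  define d where "d = b - \<phi> a"
  have pointwise: "qsn q J m (b * tpi (tmap \<phi> (M k)) - b)
      \<le> c m * qsn p I (lvl m) (a * tpi (M k) - a) + q m d * (c m * tsn p I (lvl m) (M k) + 1)" for k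
  proof -
    have "b * tpi (tmap \<phi> (M k)) - b = \<phi> (a * tpi (M k) - a) + (d * \<phi> (tpi (M k)) - d)"
      by (simp add: tpi_tmap[OF hom] d_def alg_hom_diff[OF hom] alg_hom_mult[OF hom] algebra_simps)
    then have "qsn q J m (b * tpi (tmap \<phi> (M k)) - b)
        \<le> qsn q J m (\<phi> (a * tpi (M k) - a)) + qsn q J m (d * \<phi> (tpi (M k)) - d)"
      by (simp add: B.qsn_triangle)
    also have "\<dots> \<le> qsn q J m (\<phi> (a * tpi (M k) - a)) + (qsn q J m (d * \<phi> (tpi (M k))) + qsn q J m d)"
      by (intro add_left_mono B.qsn_diff_le)
    also have "\<dots> \<le> c m * qsn p I (lvl m) (a * tpi (M k) - a)
        + (q m d * (c m * tsn p I (lvl m) (M k)) + q m d)"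
    proof (intro add_mono qsn_image_le B.qsn_le_seminorm)
      have "qsn q J m (d * \<phi> (tpi (M k))) \<le> q m d * qsn q J m (\<phi> (tpi (M k)))"
        by (rule B.qsn_mult_left)
      also have "\<dots> \<le> q m d * (c m * qsn p I (lvl m) (tpi (M k)))"
        by (intro mult_left_mono qsn_image_le B.p_nonneg)
      also have "\<dots> \<le> q m d * (c m * tsn p I (lvl m) (M k))"
        using c_pos[of m] by (intro mult_left_mono A.qsn_tpi_le_tsn B.p_nonneg) simp_all
      finally show "qsn q J m (d * \<phi> (tpi (M k))) \<le> q m d * (c m * tsn p I (lvl m) (M k))" .
    qed
    finally show ?thesis by (simp add: algebra_simps)
  qed
  have "(\<lambda>k. c m * qsn p I (lvl m) (a * tpi (M k) - a) + q m d * (c m * tsn p I (lvl m) (M k) + 1))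
      \<longlonglongrightarrow> c m * t + q m d * (c m * s + 1)"
    using A.convergent_tsn[OF M] A.convergent_qsn_unit_defect[OF M]
    unfolding s_def t_def convergent_LIMSEQ_iff by (intro tendsto_intros)
  then have "lim (\<lambda>k. qsn q J m (b * tpi (tmap \<phi> (M k)) - b)) \<le> c m * t + q m d * (c m * s + 1)"
    by (rule lim_le_LIMSEQ[OF pointwise B.convergent_qsn_unit_defect[OF tcauchy_tmap[OF M]]])
  also have "\<dots> < c m * \<eta> + \<delta> * (c m * C + 1)"
  proof -
    have "q m d * (c m * s + 1) \<le> \<delta> * (c m * C + 1)"
      using approx bound B.p_nonneg[of m d] A.lim_tsn_nonneg[OF M] c_pos[of m]
      by (intro mult_mono) (auto simp: s_def d_def)
    moreover have "c m * t < c m * \<eta>"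
      using small c_pos[of m] by (simp add: t_def)
    ultimately show ?thesis by simp
  qed
  finally show ?thesis .
qed

lemma approximate_diagonal_image:
  assumes dense: "sn_dense q (range \<phi>)" and F: "finite F" and \<epsilon>: "\<epsilon> > 0" and C: "C > 0"
    and diag: "\<And>F' \<eta>. finite F' \<and> F' \<subseteq> - I \<and> \<eta> > 0 \<Longrightarrow> \<exists>M. tcauchy p I M
      \<and> lim (\<lambda>k. tsn p I (lvl m) (M k)) \<le> C
      \<and> (\<forall>a\<in>F'. lim (\<lambda>k. tsn p I (lvl m) (tcomm a (M k))) < \<eta>)
      \<and> (\<forall>a. lim (\<lambda>k. qsn p I (lvl m) (a * tpi (M k) - a)) < \<eta>)"
  shows "\<exists>M. tcauchy q J M
      \<and> lim (\<lambda>k. tsn q J m (M k)) \<le> (c m)\<^sup>2 * C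
      \<and> (\<forall>b\<in>F. lim (\<lambda>k. tsn q J m (tcomm b (M k))) < \<epsilon>)
      \<and> (\<forall>b. lim (\<lambda>k. qsn q J m (b * tpi (M k) - b)) < \<epsilon>)"
proof -
  obtain \<eta> \<delta> where \<eta>: "\<eta> > 0" and \<delta>: "\<delta> > 0"
    and budget: "(c m)\<^sup>2 * (\<eta> + 2 * \<delta> * C) \<le> \<epsilon>" "c m * \<eta> + \<delta> * (c m * C + 1) \<le> \<epsilon>"
    using error_budget[OF c_pos less_imp_le[OF C] \<epsilon>] by blast
  have "\<exists>a. q m (b - \<phi> a) < \<delta>" for b
    using B.dense_approx[OF dense \<delta>] by auto
  then obtain approx where approx: "\<And>b. q m (b - \<phi> (approx b)) < \<delta>"
    by metis
  obtain M where M: "tcauchy p I M" and bound: "lim (\<lambda>k. tsn p I (lvl m) (M k)) \<le> C"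
    and comm: "\<forall>a\<in>approx ` F - I. lim (\<lambda>k. tsn p I (lvl m) (tcomm a (M k))) < \<eta>"
    and unit: "\<And>a. lim (\<lambda>k. qsn p I (lvl m) (a * tpi (M k) - a)) < \<eta>"
    using diag[of "approx ` F - I" \<eta>] F \<eta> by auto
  have "lim (\<lambda>k. tsn p I (lvl m) (tcomm (approx b) (M k))) < \<eta>" if "b \<in> F" for b
    using comm that \<eta> by (cases "approx b \<in> I") (simp_all add: A.tsn_tcomm_ideal)
  then have "lim (\<lambda>k. tsn q J m (tcomm b (tmap \<phi> (M k)))) < \<epsilon>" if "b \<in> F" for b
    using lim_tsn_tcomm_tmap_less[OF M bound _ less_imp_le[OF approx]] that budget(1)
    by (meson less_le_trans)
  moreover have "lim (\<lambda>k. qsn q J m (b * tpi (tmap \<phi> (M k)) - b)) < \<epsilon>" for b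
    using lim_qsn_unit_defect_tmap_less[OF M bound unit less_imp_le[OF approx]] budget(2)
    by (meson less_le_trans)
  moreover have "lim (\<lambda>k. tsn q J m (tmap \<phi> (M k))) \<le> (c m)\<^sup>2 * C"
    using lim_tsn_tmap_le[OF M] bound by (meson mult_left_mono order_trans zero_le_power2)
  ultimately show ?thesis
    using tcauchy_tmap[OF M] by blast
qed

lemma has_lbad_image:
  assumes dense: "sn_dense q (range \<phi>)" and "has_lbad p I"
  shows "has_lbad q J"
proof -
  from assms(2) obtain C where C: "\<And>n. C n > 0"
    and diag: "\<And>F n \<eta>. finite F \<and> F \<subseteq> - I \<and> \<eta> > 0 \<Longrightarrow> \<exists>M. tcauchy p I M
      \<and> lim (\<lambda>k. tsn p I n (M k)) \<le> C n
      \<and> (\<forall>a\<in>F. lim (\<lambda>k. tsn p I n (tcomm a (M k))) < \<eta>)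
      \<and> (\<forall>a. lim (\<lambda>k. qsn p I n (a * tpi (M k) - a)) < \<eta>)"
    unfolding has_lbad_def tcomm_def[symmetric] by (elim exE conjE) (rule that; blast)
  show ?thesis
    unfolding has_lbad_def tcomm_def[symmetric]
  proof (intro exI[of _ "\<lambda>m. (c m)\<^sup>2 * C (lvl m)"] conjI allI impI)
    show "0 < (c m)\<^sup>2 * C (lvl m)" for m
      using c_pos[of m] C[of "lvl m"] by simp
    fix F m \<epsilon> assume "finite F \<and> F \<subseteq> - J \<and> (\<epsilon>::real) > 0"
    then show "\<exists>M. tcauchy q J M
      \<and> lim (\<lambda>k. tsn q J m (M k)) \<le> (c m)\<^sup>2 * C (lvl m)
      \<and> (\<forall>b\<in>F. lim (\<lambda>k. tsn q J m (tcomm b (M k))) < \<epsilon>)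
      \<and> (\<forall>b. lim (\<lambda>k. qsn q J m (b * tpi (M k) - b)) < \<epsilon>)"
      using approximate_diagonal_image[OF dense _ _ C[of "lvl m"] diag] by blast
  qed
qed

end

theorem theorem2p3:
  fixes p :: "nat \<Rightarrow> 'a::real_algebra \<Rightarrow> real"
    and q :: "nat \<Rightarrow> 'b::real_algebra \<Rightarrow> real"
    and \<phi> :: "'a \<Rightarrow> 'b"
    and I :: "'a set" and J :: "'b set"
  assumes "frechet_algebra p" and "frechet_algebra q"
    and "alg_hom \<phi>" and "sn_continuous p q \<phi>" and "sn_dense q (range \<phi>)"
    and "closed_ideal p I" and "closed_ideal q J" and "\<phi> ` I \<subseteq> J"
    and "has_lbad p I"
  shows "has_lbad q J"
proof -
  have A: "frechet_quotient p I" and B: "frechet_quotient q J"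
    using assms(1,2,6,7)
    by (simp_all add: frechet_quotient_def frechet_quotient_axioms_def frechet_seminorms_def closed_ideal_def)
  have "\<forall>m. \<exists>n c. c > 0 \<and> (\<forall>x. q m (\<phi> x) \<le> c * p n x)"
    using continuous_seminorm_bound[OF frechet_seminorms.intro frechet_seminorms.intro] assms(1-4) by blast
  then obtain lvl c where "\<And>m. c m > 0" "\<And>m x. q m (\<phi> x) \<le> c m * p (lvl m) x"
    by metis
  then interpret frechet_quotient_morphism p I q J \<phi> lvl c
    using A B assms(3,8) by (simp add: frechet_quotient_morphism_def frechet_quotient_morphism_axioms_def)
  show ?thesis
    using has_lbad_image assms(5,9) by blast
qed

end
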